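(* Let $L$ be a distributive lattice, let $B$ be the Boolean algebra generated by $L$, let $n\ge1$, and for each $i\in[n]$ let $a_i,b_i\in L$ with $a_i<b_i$. For $I\subseteq[n]$ let $\widehat{\mathbf e}_I\in L^n$ have $i$-th component $b_i$ if $i\in I$ and $a_i$ if $i\notin I$, and let $D=\{\widehat{\mathbf e}_I: I\subseteq[n]\}$. Let $f\colon D\to L$ be monotone and satisfy $$f(\widehat{\mathbf e}_{I\cup\{k\}})\wedge a_k\le f(\widehat{\mathbf e}_I)\le f(\widehat{\mathbf e}_{I\setminus\{k\}})\vee b_k\quad\text{for all } I\subseteq[n],\ k\in[n].$$ Let $p$ be the $n$-ary polynomial function over $B$ given by $p(\mathbf x)=\bigvee_{I\subseteq[n]}(c_I\wedge\bigwedge_{i\in I}x_i)$ for a monotone system of coefficients $c_I\in B$ ($I\subseteq[n]$). Then the following are equivalent: (i) $p|_D=f$; (ii) $c_I^-\le c_I\le c_I^+$ for all $I\subseteq[n]$; (iii) $p^-(\mathbf x)\le p(\mathbf x)\le p^+(\mathbf x)$ for all $\mathbf x\in L^n$.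
   Context: $B$ is the Boolean algebra generated by $L$ in which $L$ embeds (Birkhoff–Priestley), with bounds $0,1$ and complement $x\mapsto x'$. A system of coefficients is monotone if $I\subseteq J$ implies $c_I\le c_J$. $f$ monotone means $I\subseteq J\Rightarrow f(\widehat{\mathbf e}_I)\le f(\widehat{\mathbf e}_J)$. Define $c_I^-=f(\widehat{\mathbf e}_I)\wedge\bigwedge_{i\notin I}a_i'$ and $c_I^+=f(\widehat{\mathbf e}_I)\vee\bigvee_{i\in I}b_i'$ in $B$, and let $p^-(\mathbf x)=\bigvee_{I\subseteq[n]}(c_I^-\wedge\bigwedge_{i\in I}x_i)$, $p^+(\mathbf x)=\bigvee_{I\subseteq[n]}(c_I^+\wedge\bigwedge_{i\in I}x_i)$, polynomial functions over $B$. *)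

theory Defs
  imports Main
begin

text \<open>L is a sublattice of the Boolean algebra B (the ambient type), and B is generated by L.\<close>

definition sublattice :: "'b::boolean_algebra set \<Rightarrow> bool" where
  "sublattice L \<longleftrightarrow> L \<noteq> {} \<and> (\<forall>x\<in>L. \<forall>y\<in>L. inf x y \<in> L \<and> sup x y \<in> L)"

inductive_set bool_gen :: "'b::boolean_algebra set \<Rightarrow> 'b set" for L where
  gen_base: "x \<in> L \<Longrightarrow> x \<in> bool_gen L"
| gen_bot: "bot \<in> bool_gen L"
| gen_top: "top \<in> bool_gen L"
| gen_compl: "x \<in> bool_gen L \<Longrightarrow> - x \<in> bool_gen L"
| gen_inf: "x \<in> bool_gen L \<Longrightarrow> y \<in> bool_gen L \<Longrightarrow> inf x y \<in> bool_gen L"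
| gen_sup: "x \<in> bool_gen L \<Longrightarrow> y \<in> bool_gen L \<Longrightarrow> sup x y \<in> bool_gen L"

definition binf :: "'b::bounded_lattice set \<Rightarrow> 'b" where
  "binf A = Finite_Set.fold inf top A"

definition bsup :: "'b::bounded_lattice set \<Rightarrow> 'b" where
  "bsup A = Finite_Set.fold sup bot A"

text \<open>Indices [n] = {1..n}; vectors are functions nat => 'b, only components in [n] matter.\<close>
definition ehat :: "(nat \<Rightarrow> 'b) \<Rightarrow> (nat \<Rightarrow> 'b) \<Rightarrow> nat set \<Rightarrow> nat \<Rightarrow> 'b" where
  "ehat a b I = (\<lambda>i. if i \<in> I then b i else a i)"

definition polyfun :: "nat \<Rightarrow> (nat set \<Rightarrow> 'b::boolean_algebra) \<Rightarrow> (nat \<Rightarrow> 'b) \<Rightarrow> 'b" where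
  "polyfun n c x = bsup ((\<lambda>I. inf (c I) (binf (x ` I))) ` Pow {1..n})"

definition cminus :: "nat \<Rightarrow> (nat \<Rightarrow> 'b::boolean_algebra) \<Rightarrow> (nat \<Rightarrow> 'b) \<Rightarrow> ((nat \<Rightarrow> 'b) \<Rightarrow> 'b) \<Rightarrow> nat set \<Rightarrow> 'b" where
  "cminus n a b f I = inf (f (ehat a b I)) (binf ((\<lambda>i. - a i) ` ({1..n} - I)))"

definition cplus :: "nat \<Rightarrow> (nat \<Rightarrow> 'b::boolean_algebra) \<Rightarrow> (nat \<Rightarrow> 'b) \<Rightarrow> ((nat \<Rightarrow> 'b) \<Rightarrow> 'b) \<Rightarrow> nat set \<Rightarrow> 'b" where
  "cplus n a b f I = sup (f (ehat a b I)) (bsup ((\<lambda>i. - b i) ` I))"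

end

theory Submission
  imports Defs
begin

text \<open>
  Write \<open>e\<^sub>J\<close> for \<open>ehat a b J\<close> and \<open>p\<close> for the polynomial function with coefficients \<open>c\<close>.
  If \<open>c\<^sub>I \<le> c\<^sub>I\<^sup>+\<close>, the \<open>I\<close>-th term of \<open>p(e\<^sub>J)\<close> lies below \<open>b\<^sub>i\<close> for every \<open>i \<in> I\<close>, so it is
  at most \<open>f(e\<^sub>I)\<close> met with the \<open>a\<^sub>i\<close>, \<open>i \<in> I - J\<close>, which the lower condition on \<open>f\<close> bounds by
  \<open>f(e\<^bsub>I \<inter> J\<^esub>) \<le> f(e\<^sub>J)\<close>. If \<open>c\<^sub>I\<^sup>- \<le> c\<^sub>I\<close>, then \<open>f(e\<^sub>J) \<le> p(e\<^sub>J)\<close> by induction on \<open>J\<close>, splitting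
  \<open>f(e\<^sub>J)\<close> along the atoms generated by the \<open>b\<^sub>i\<close>, \<open>i \<in> J\<close>: where some \<open>b\<^sub>k\<close> fails, the upper
  condition passes to \<open>f(e\<^bsub>J - {k}\<^esub>)\<close>; below all \<open>b\<^sub>i\<close> we split further along the \<open>a\<^sub>i\<close>,
  \<open>i \<notin> J\<close>, and the piece where exactly the \<open>a\<^sub>i\<close> with \<open>i \<in> K\<close> hold lies in the term of
  \<open>c\<^bsub>J \<union> K\<^esub> \<ge> c\<^sup>-\<^bsub>J \<union> K\<^esub>\<close>. Conversely, for monotone \<open>c\<close> both bounds can be read off from
  \<open>p(e\<^sub>I) = f(e\<^sub>I)\<close>. Finally \<open>c\<^sup>-\<close> and \<open>c\<^sup>+\<close> satisfy their own bounds, so \<open>p\<^sup>-\<close> and \<open>p\<^sup>+\<close>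
  interpolate \<open>f\<close>, and (iii) squeezes \<open>p\<close> between them on \<open>D\<close>.
\<close>

lemma binf_empty [simp]: "binf {} = top"
  by (simp add: binf_def)

lemma binf_insert [simp]: "finite A \<Longrightarrow> binf (insert x A) = inf x (binf A)"
  unfolding binf_def
  by (simp add: comp_fun_idem_on.fold_insert_idem[OF comp_fun_idem_inf[unfolded comp_fun_idem_def']])

lemma bsup_empty [simp]: "bsup {} = bot"
  by (simp add: bsup_def)

lemma bsup_insert [simp]: "finite A \<Longrightarrow> bsup (insert x A) = sup x (bsup A)"
  unfolding bsup_def
  by (simp add: comp_fun_idem_on.fold_insert_idem[OF comp_fun_idem_sup[unfolded comp_fun_idem_def']])

lemma le_binf_iff: "finite A \<Longrightarrow> x \<le> binf A \<longleftrightarrow> (\<forall>a\<in>A. x \<le> a)"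
  by (induction A rule: finite_induct) auto

lemma bsup_le_iff: "finite A \<Longrightarrow> bsup A \<le> x \<longleftrightarrow> (\<forall>a\<in>A. a \<le> x)"
  by (induction A rule: finite_induct) auto

lemma binf_le: "finite A \<Longrightarrow> a \<in> A \<Longrightarrow> binf A \<le> a"
  using le_binf_iff by blast

lemma le_bsup: "finite A \<Longrightarrow> a \<in> A \<Longrightarrow> a \<le> bsup A"
  using bsup_le_iff by blast

text \<open>The atoms of the Boolean subalgebra generated by the \<open>x i\<close>, \<open>i \<in> S\<close>, join to \<open>top\<close>.\<close>

lemma le_by_atoms:
  fixes x :: "'i \<Rightarrow> 'b::boolean_algebra"
  assumes "finite S"
    and "\<And>K. K \<subseteq> S \<Longrightarrow> inf y (inf (binf (x ` K)) (binf ((\<lambda>i. - x i) ` (S - K)))) \<le> z"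
  shows "y \<le> z"
  using assms
proof (induction S arbitrary: y rule: finite_induct)
  case empty
  then show ?case by simp
next
  case (insert k S)
  have "inf y (x k) \<le> z"
  proof (rule insert.IH)
    fix K assume "K \<subseteq> S"
    moreover from this have "finite K"
      using insert.hyps(1) by (rule finite_subset)
    ultimately show "inf (inf y (x k)) (inf (binf (x ` K)) (binf ((\<lambda>i. - x i) ` (S - K)))) \<le> z"
      using insert.prems[of "insert k K"] insert.hyps by (auto simp: inf_assoc)
  qed
  moreover have "inf y (- x k) \<le> z"
  proof (rule insert.IH)
    fix K assume K: "K \<subseteq> S"
    then have "k \<notin> K" "insert k S - K = insert k (S - K)"
      using insert.hyps(2) by auto
    with K show "inf (inf y (- x k)) (inf (binf (x ` K)) (binf ((\<lambda>i. - x i) ` (S - K)))) \<le> z"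
      using insert.prems[of K] insert.hyps by (auto simp: inf_assoc inf_left_commute)
  qed
  ultimately have "sup (inf y (x k)) (inf y (- x k)) \<le> z"
    by simp
  then show ?case
    by (simp flip: inf_sup_distrib1)
qed

lemma polyfun_le_iff:
  "polyfun n c x \<le> y \<longleftrightarrow> (\<forall>I\<subseteq>{1..n}. inf (c I) (binf (x ` I)) \<le> y)"
  unfolding polyfun_def by (subst bsup_le_iff) auto

lemma le_polyfun: "I \<subseteq> {1..n} \<Longrightarrow> y \<le> inf (c I) (binf (x ` I)) \<Longrightarrow> y \<le> polyfun n c x"
  unfolding polyfun_def by (erule order_trans) (auto intro: le_bsup)

lemma polyfun_mono_coeff:
  "(\<And>I. I \<subseteq> {1..n} \<Longrightarrow> c I \<le> d I) \<Longrightarrow> polyfun n c x \<le> polyfun n d x"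
  unfolding polyfun_le_iff by (meson inf_mono le_polyfun order_refl)

lemma polyfun_mono:
  assumes "\<And>i. i \<in> {1..n} \<Longrightarrow> x i \<le> y i"
  shows "polyfun n c x \<le> polyfun n c y"
  unfolding polyfun_le_iff
proof (intro allI impI)
  fix I assume I: "I \<subseteq> {1..n}"
  then have "finite I"
    by (rule finite_subset) simp
  have "binf (x ` I) \<le> y i" if "i \<in> I" for i
  proof -
    have "binf (x ` I) \<le> x i"
      using \<open>finite I\<close> that by (intro binf_le) auto
    also have "x i \<le> y i"
      using I that by (intro assms) auto
    finally show ?thesis .
  qed
  with \<open>finite I\<close> have "binf (x ` I) \<le> binf (y ` I)"
    by (simp add: le_binf_iff)
  then show "inf (c I) (binf (x ` I)) \<le> polyfun n c y"
    by (intro le_polyfun[OF I] inf_mono order_refl)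
qed

lemma ehat_in [simp]: "i \<in> I \<Longrightarrow> ehat a b I i = b i"
  and ehat_notin [simp]: "i \<notin> I \<Longrightarrow> ehat a b I i = a i"
  by (simp_all add: ehat_def)

lemma cminus_le_cplus: "cminus n a b f I \<le> cplus n a b f I"
  unfolding cminus_def cplus_def by (rule order_trans[OF inf_le1 sup_ge1])

lemma cminus_le_coeff_if_interpolates:
  assumes c_mono: "\<And>I J. I \<subseteq> J \<Longrightarrow> J \<subseteq> {1..n} \<Longrightarrow> c I \<le> c J"
    and I: "I \<subseteq> {1..n}"
    and interp: "polyfun n c (ehat a b I) = f (ehat a b I)"
  shows "cminus n a b f I \<le> c I"
proof -
  let ?z = "binf ((\<lambda>i. - a i) ` ({1..n} - I))"
  have "polyfun n c (ehat a b I) \<le> sup (c I) (- ?z)"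
    unfolding polyfun_le_iff
  proof (intro allI impI)
    fix K assume K: "K \<subseteq> {1..n}"
    show "inf (c K) (binf (ehat a b I ` K)) \<le> sup (c I) (- ?z)"
    proof (cases "K \<subseteq> I")
      case True
      have "c K \<le> c I" by (rule c_mono[OF True I])
      then show ?thesis by (intro le_infI1 le_supI1)
    next
      case False
      then obtain k where k: "k \<in> K" "k \<notin> I" by blast
      have "finite K"
        using K by (rule finite_subset) simp
      with k have "binf (ehat a b I ` K) \<le> ehat a b I k"
        by (intro binf_le finite_imageI imageI)
      also have "\<dots> = a k"
        using k by simp
      also have "\<dots> \<le> - ?z"
      proof (rule compl_le_swap1)
        show "?z \<le> - a k"
          using k K by (intro binf_le) auto
      qed
      finally show ?thesis by (intro le_infI2 le_supI2)
    qed
  qed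
  then show ?thesis
    using interp by (simp add: cminus_def shunt1 sup_commute)
qed

lemma coeff_le_cplus_if_interpolates:
  assumes I: "I \<subseteq> {1..n}"
    and interp: "polyfun n c (ehat a b I) = f (ehat a b I)"
  shows "c I \<le> cplus n a b f I"
proof -
  let ?s = "bsup ((\<lambda>i. - b i) ` I)"
  have fin: "finite I"
    using I by (rule finite_subset) simp
  have "- ?s \<le> binf (ehat a b I ` I)"
  unfolding le_binf_iff[OF finite_imageI[OF fin]]
  proof
    fix y assume "y \<in> ehat a b I ` I"
    then obtain i where i: "i \<in> I" "y = b i" by auto
    with fin have "- b i \<le> ?s" by (intro le_bsup) auto
    with i show "- ?s \<le> y" by (simp add: compl_le_swap2)
  qed
  then have "inf (c I) (- ?s) \<le> polyfun n c (ehat a b I)"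
    by (intro le_polyfun[OF I] inf_mono order_refl)
  then show ?thesis
    using interp by (simp add: cplus_def shunt2 sup_commute)
qed

locale interpolation_data =
  fixes n :: nat and a b :: "nat \<Rightarrow> 'b::boolean_algebra" and f :: "(nat \<Rightarrow> 'b) \<Rightarrow> 'b"
  assumes a_le_b: "i \<in> {1..n} \<Longrightarrow> a i \<le> b i"
    and f_mono: "I \<subseteq> J \<Longrightarrow> J \<subseteq> {1..n} \<Longrightarrow> f (ehat a b I) \<le> f (ehat a b J)"
    and f_insert_inf_le: "I \<subseteq> {1..n} \<Longrightarrow> k \<in> {1..n} \<Longrightarrow>
      inf (f (ehat a b (insert k I))) (a k) \<le> f (ehat a b I)"
    and f_le_remove_sup: "I \<subseteq> {1..n} \<Longrightarrow> k \<in> {1..n} \<Longrightarrow>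
      f (ehat a b I) \<le> sup (f (ehat a b (I - {k}))) (b k)"
begin

lemma polyfun_ehat_mono: "J \<subseteq> K \<Longrightarrow> polyfun n c (ehat a b J) \<le> polyfun n c (ehat a b K)"
  by (rule polyfun_mono) (auto simp: ehat_def a_le_b)

lemma f_inf_binf_a_le_Diff:
  assumes "D \<subseteq> I" and I: "I \<subseteq> {1..n}"
  shows "inf (f (ehat a b I)) (binf (a ` D)) \<le> f (ehat a b (I - D))"
proof -
  have "finite D"
    using assms by (meson finite_atLeastAtMost finite_subset)
  then show ?thesis
    using \<open>D \<subseteq> I\<close>
  proof (induction D rule: finite_induct)
    case empty
    then show ?case by simp
  next
    case (insert k D)
    have k: "k \<in> I - D" "k \<in> {1..n}"
      using insert I by auto
    then have I_D: "insert k (I - insert k D) = I - D"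
      by auto
    have "inf (f (ehat a b I)) (binf (a ` insert k D))
        = inf (inf (f (ehat a b I)) (binf (a ` D))) (a k)"
      using insert.hyps by (simp add: inf_commute inf_left_commute)
    also have "\<dots> \<le> inf (f (ehat a b (I - D))) (a k)"
      using insert by (intro inf_mono) simp_all
    also have "\<dots> = inf (f (ehat a b (insert k (I - insert k D)))) (a k)"
      by (simp only: I_D)
    also have "\<dots> \<le> f (ehat a b (I - insert k D))"
      using I k by (intro f_insert_inf_le) auto
    finally show ?case .
  qed
qed

lemma polyfun_ehat_le_f:
  assumes c_le: "\<And>I. I \<subseteq> {1..n} \<Longrightarrow> c I \<le> cplus n a b f I"
    and J: "J \<subseteq> {1..n}"
  shows "polyfun n c (ehat a b J) \<le> f (ehat a b J)"
  unfolding polyfun_le_iff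
proof (intro allI impI)
  fix I assume I: "I \<subseteq> {1..n}"
  have fin: "finite I"
    using I by (rule finite_subset) simp
  let ?z = "binf (ehat a b J ` I)"
  let ?s = "bsup ((\<lambda>i. - b i) ` I)"
  have "?z \<le> b i" if "i \<in> I" for i
  proof -
    have "?z \<le> ehat a b J i"
      using fin that by (intro binf_le finite_imageI imageI) simp_all
    also have "\<dots> \<le> b i"
      using I that by (auto simp: ehat_def a_le_b)
    finally show ?thesis .
  qed
  then have disjoint: "inf ?s ?z = bot"
    using fin by (simp add: inf_shunt bsup_le_iff compl_le_swap2)
  have "?z \<le> a i" if "i \<in> I - J" for i
  proof -
    have "?z \<le> ehat a b J i"
      using fin that by (intro binf_le finite_imageI imageI) simp_all
    with that show ?thesis by simp
  qed
  then have z_le: "?z \<le> binf (a ` (I - J))"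
    using fin by (simp add: le_binf_iff)
  have "inf (c I) ?z \<le> inf (sup (f (ehat a b I)) ?s) ?z"
    using c_le[OF I] unfolding cplus_def by (rule inf_mono) simp
  also have "\<dots> = inf (f (ehat a b I)) ?z"
    using disjoint by (simp add: inf_sup_distrib2)
  also have "\<dots> \<le> inf (f (ehat a b I)) (binf (a ` (I - J)))"
    using z_le by (rule inf_mono[OF order_refl])
  also have "\<dots> \<le> f (ehat a b (I - (I - J)))"
    using I by (intro f_inf_binf_a_le_Diff) auto
  also have "\<dots> \<le> f (ehat a b J)"
    using J by (intro f_mono) auto
  finally show "inf (c I) ?z \<le> f (ehat a b J)" .
qed

lemma f_inf_binf_b_le_polyfun:
  assumes c_ge: "\<And>I. I \<subseteq> {1..n} \<Longrightarrow> cminus n a b f I \<le> c I"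
    and J: "J \<subseteq> {1..n}"
  shows "inf (f (ehat a b J)) (binf (b ` J)) \<le> polyfun n c (ehat a b J)"
proof (rule le_by_atoms[where S = "{1..n} - J" and x = a])
  fix K assume K: "K \<subseteq> {1..n} - J"
  define M where "M = J \<union> K"
  have M: "M \<subseteq> {1..n}" "{1..n} - M = {1..n} - J - K"
    using J K by (auto simp: M_def)
  have fin: "finite J" "finite K"
    using J K by (auto intro: finite_subset)
  have "inf (binf (b ` J)) (binf (a ` K)) \<le> ehat a b J i" if "i \<in> M" for i
  proof (cases "i \<in> J")
    case True
    with fin show ?thesis by (simp, intro le_infI1 binf_le) auto
  next
    case False
    with that have "i \<in> K" by (simp add: M_def)
    with False fin show ?thesis by (simp, intro le_infI2 binf_le) auto
  qed
  then have "inf (binf (b ` J)) (binf (a ` K)) \<le> binf (ehat a b J ` M)"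
    using fin by (simp add: M_def le_binf_iff)
  moreover have "f (ehat a b J) \<le> f (ehat a b M)"
    using M by (intro f_mono) (auto simp: M_def)
  ultimately have "inf (inf (f (ehat a b J)) (binf (b ` J)))
      (inf (binf (a ` K)) (binf ((\<lambda>i. - a i) ` ({1..n} - J - K))))
      \<le> inf (cminus n a b f M) (binf (ehat a b J ` M))"
    unfolding cminus_def M(2)
    by (meson inf_le1 inf_le2 le_infI le_infI1 le_infI2 order_trans inf_mono)
  also have "\<dots> \<le> polyfun n c (ehat a b J)"
    using M c_ge by (intro le_polyfun[OF M(1)] inf_mono order_refl)
  finally show "inf (inf (f (ehat a b J)) (binf (b ` J)))
      (inf (binf (a ` K)) (binf ((\<lambda>i. - a i) ` ({1..n} - J - K))))
      \<le> polyfun n c (ehat a b J)" .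
qed simp

lemma f_le_polyfun_ehat:
  assumes c_ge: "\<And>I. I \<subseteq> {1..n} \<Longrightarrow> cminus n a b f I \<le> c I"
    and J: "J \<subseteq> {1..n}"
  shows "f (ehat a b J) \<le> polyfun n c (ehat a b J)"
proof -
  have "finite J"
    using J by (rule finite_subset) simp
  then show ?thesis
    using J
  proof (induction J rule: finite_psubset_induct)
    case (psubset J)
    show ?case
    proof (rule le_by_atoms[where S = J and x = b])
      fix K assume K: "K \<subseteq> J"
      show "inf (f (ehat a b J)) (inf (binf (b ` K)) (binf ((\<lambda>i. - b i) ` (J - K))))
          \<le> polyfun n c (ehat a b J)"
      proof (cases "K = J")
        case True
        then show ?thesis
          using f_inf_binf_b_le_polyfun[OF c_ge psubset.prems] by simp
      next
        case False
        with K obtain k where k: "k \<in> J" "k \<notin> K" by blast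
        have "binf ((\<lambda>i. - b i) ` (J - K)) \<le> - b k"
          using k psubset.hyps by (intro binf_le) auto
        then have "inf (f (ehat a b J)) (inf (binf (b ` K)) (binf ((\<lambda>i. - b i) ` (J - K))))
            \<le> inf (f (ehat a b J)) (- b k)"
          by (meson inf_le2 inf_mono order_refl order_trans)
        also have "\<dots> \<le> f (ehat a b (J - {k}))"
          using f_le_remove_sup[of J k] psubset.prems k by (auto simp: shunt2 sup_commute)
        also have "\<dots> \<le> polyfun n c (ehat a b (J - {k}))"
          using k psubset.prems by (intro psubset.IH) auto
        also have "\<dots> \<le> polyfun n c (ehat a b J)"
          by (rule polyfun_ehat_mono) auto
        finally show ?thesis .
      qed
    qed (rule psubset.hyps)
  qed
qed

lemma interpolates_if_coeff_bounds:
  assumes "\<And>I. I \<subseteq> {1..n} \<Longrightarrow> cminus n a b f I \<le> c I \<and> c I \<le> cplus n a b f I"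
    and "J \<subseteq> {1..n}"
  shows "polyfun n c (ehat a b J) = f (ehat a b J)"
  using assms by (meson order_antisym polyfun_ehat_le_f f_le_polyfun_ehat)

lemma interpolates_iff_coeff_bounds:
  assumes c_mono: "\<And>I J. I \<subseteq> J \<Longrightarrow> J \<subseteq> {1..n} \<Longrightarrow> c I \<le> c J"
  shows "(\<forall>I. I \<subseteq> {1..n} \<longrightarrow> polyfun n c (ehat a b I) = f (ehat a b I))
    \<longleftrightarrow> (\<forall>I. I \<subseteq> {1..n} \<longrightarrow> cminus n a b f I \<le> c I \<and> c I \<le> cplus n a b f I)"
proof (intro iffI allI impI)
  fix I assume "\<forall>J. J \<subseteq> {1..n} \<longrightarrow> polyfun n c (ehat a b J) = f (ehat a b J)"
    and I: "I \<subseteq> {1..n}"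
  then have "polyfun n c (ehat a b I) = f (ehat a b I)"
    by blast
  then show "cminus n a b f I \<le> c I \<and> c I \<le> cplus n a b f I"
    by (intro conjI cminus_le_coeff_if_interpolates[OF c_mono I] coeff_le_cplus_if_interpolates[OF I])
next
  fix I assume bounds: "\<forall>J. J \<subseteq> {1..n} \<longrightarrow> cminus n a b f J \<le> c J \<and> c J \<le> cplus n a b f J"
    and I: "I \<subseteq> {1..n}"
  show "polyfun n c (ehat a b I) = f (ehat a b I)"
    by (rule interpolates_if_coeff_bounds[OF _ I]) (use bounds in blast)
qed

lemma coeff_bounds_iff_polyfun_bounds:
  assumes c_mono: "\<And>I J. I \<subseteq> J \<Longrightarrow> J \<subseteq> {1..n} \<Longrightarrow> c I \<le> c J"
    and ab_L: "\<And>i. i \<in> {1..n} \<Longrightarrow> a i \<in> L \<and> b i \<in> L"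
  shows "(\<forall>I. I \<subseteq> {1..n} \<longrightarrow> cminus n a b f I \<le> c I \<and> c I \<le> cplus n a b f I)
    \<longleftrightarrow> (\<forall>x. (\<forall>i\<in>{1..n}. x i \<in> L) \<longrightarrow>
          polyfun n (cminus n a b f) x \<le> polyfun n c x \<and> polyfun n c x \<le> polyfun n (cplus n a b f) x)"
    (is "?bounds \<longleftrightarrow> ?squeezed")
proof
  assume bounds: ?bounds
  show ?squeezed
  proof (intro allI impI conjI)
    fix x
    show "polyfun n (cminus n a b f) x \<le> polyfun n c x"
      by (rule polyfun_mono_coeff) (use bounds in blast)
    show "polyfun n c x \<le> polyfun n (cplus n a b f) x"
      by (rule polyfun_mono_coeff) (use bounds in blast)
  qed
next
  assume squeezed: ?squeezed
  have "polyfun n c (ehat a b J) = f (ehat a b J)" if J: "J \<subseteq> {1..n}" for J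
  proof (rule order_antisym)
    have "\<forall>i\<in>{1..n}. ehat a b J i \<in> L"
      using ab_L by (simp add: ehat_def)
    then have "polyfun n (cminus n a b f) (ehat a b J) \<le> polyfun n c (ehat a b J)
        \<and> polyfun n c (ehat a b J) \<le> polyfun n (cplus n a b f) (ehat a b J)"
      using squeezed by blast
    moreover have "polyfun n (cminus n a b f) (ehat a b J) = f (ehat a b J)"
      and "polyfun n (cplus n a b f) (ehat a b J) = f (ehat a b J)"
      by (rule interpolates_if_coeff_bounds[OF _ J], simp add: cminus_le_cplus)+
    ultimately show "polyfun n c (ehat a b J) \<le> f (ehat a b J)"
      and "f (ehat a b J) \<le> polyfun n c (ehat a b J)"
      by auto
  qed
  then have "\<forall>J. J \<subseteq> {1..n} \<longrightarrow> polyfun n c (ehat a b J) = f (ehat a b J)"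
    by blast
  with interpolates_iff_coeff_bounds[OF c_mono] show ?bounds
    by (rule iffD1)
qed

end

theorem theorem3p5:
  fixes L :: "'b::boolean_algebra set"
    and n :: nat
    and a b :: "nat \<Rightarrow> 'b"
    and f :: "(nat \<Rightarrow> 'b) \<Rightarrow> 'b"
    and c :: "nat set \<Rightarrow> 'b"
  assumes L_sub: "sublattice L"
    and B_gen: "bool_gen L = UNIV"
    and n_pos: "n \<ge> 1"
    and ab: "\<forall>i\<in>{1..n}. a i \<in> L \<and> b i \<in> L \<and> a i < b i"
    and f_L: "\<forall>I. I \<subseteq> {1..n} \<longrightarrow> f (ehat a b I) \<in> L"
    and f_mono: "\<forall>I J. I \<subseteq> J \<and> J \<subseteq> {1..n} \<longrightarrow> f (ehat a b I) \<le> f (ehat a b J)"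
    and f_cond: "\<forall>I k. I \<subseteq> {1..n} \<and> k \<in> {1..n} \<longrightarrow>
        inf (f (ehat a b (I \<union> {k}))) (a k) \<le> f (ehat a b I)
        \<and> f (ehat a b I) \<le> sup (f (ehat a b (I - {k}))) (b k)"
    and c_mono: "\<forall>I J. I \<subseteq> J \<and> J \<subseteq> {1..n} \<longrightarrow> c I \<le> c J"
  shows "((\<forall>I. I \<subseteq> {1..n} \<longrightarrow> polyfun n c (ehat a b I) = f (ehat a b I))
          \<longleftrightarrow> (\<forall>I. I \<subseteq> {1..n} \<longrightarrow> cminus n a b f I \<le> c I \<and> c I \<le> cplus n a b f I))
       \<and> ((\<forall>I. I \<subseteq> {1..n} \<longrightarrow> cminus n a b f I \<le> c I \<and> c I \<le> cplus n a b f I)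
          \<longleftrightarrow> (\<forall>x. (\<forall>i\<in>{1..n}. x i \<in> L) \<longrightarrow>
                 polyfun n (cminus n a b f) x \<le> polyfun n c x
                 \<and> polyfun n c x \<le> polyfun n (cplus n a b f) x))"
proof -
  interpret interpolation_data n a b f
    using ab f_mono f_cond by unfold_locales (auto simp: less_imp_le)
  have c_mono': "c I \<le> c J" if "I \<subseteq> J" "J \<subseteq> {1..n}" for I J
    using c_mono that by blast
  have ab_L: "a i \<in> L \<and> b i \<in> L" if "i \<in> {1..n}" for i
    using ab that by blast
  show ?thesis
    using interpolates_iff_coeff_bounds[OF c_mono'] coeff_bounds_iff_polyfun_bounds[OF c_mono' ab_L]
    by (rule conjI)
qed

end
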